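(* Let $m>0$, $h\ge0$ and $\theta>0$, and let $g(u)=\bar\Psi_{m+h}\big(\theta\,\bar\Psi_m^{-1}(u)\big)$ for $u\in(0,1)$. If $\theta\le1$, then $g$ is concave on $(0,1)$; if $\theta>1$ and $h=0$, then $g$ is convex on $(0,1)$.
   Context: $\Psi_k$ denotes the CDF of the (central) chi-squared distribution with $k$ degrees of freedom, $\bar\Psi_k=1-\Psi_k$ its survival function, and $\bar\Psi_k^{-1}:(0,1)\to(0,\infty)$ the inverse of $\bar\Psi_k$. *)

theory Defs
  imports "HOL-Analysis.Analysis"
begin

definition chi2_density :: "real \<Rightarrow> real \<Rightarrow> real" where
  "chi2_density k t =
     (if t > 0 then t powr (k/2 - 1) * exp (- t/2) / (2 powr (k/2) * Gamma (k/2)) else 0)"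

definition chi2_CDF :: "real \<Rightarrow> real \<Rightarrow> real" where
  "chi2_CDF k x = (LINT t:{..x}|lborel. chi2_density k t)"

definition chi2_surv :: "real \<Rightarrow> real \<Rightarrow> real" where
  "chi2_surv k x = 1 - chi2_CDF k x"

definition chi2_surv_inv :: "real \<Rightarrow> real \<Rightarrow> real" where
  "chi2_surv_inv k u = (THE x. x > 0 \<and> chi2_surv k x = u)"

end

theory Submission
  imports Defs "HOL-Complex_Analysis.Conformal_Mappings"
begin

text \<open>Write X for the inverse of the survival function of the chi-squared distribution with m
  degrees of freedom. By the chain rule and the inverse function rule, g'(u) is the likelihood ratio
  theta f_{m+h}(theta x) / f_m(x) of the two densities at x = X(u), which equals
  c x^{h/2} exp((1 - theta) x / 2) for some c > 0. Since X is decreasing, g' is nonincreasing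
  (g concave) when this ratio increases in x, i.e. when theta \<le> 1, and nondecreasing (g convex)
  when it decreases, i.e. when h = 0 and theta > 1.\<close>

lemma chi2_density_pos: "k > 0 \<Longrightarrow> x > 0 \<Longrightarrow> chi2_density k x > 0"
  unfolding chi2_density_def by (simp add: Gamma_real_pos)

lemma chi2_density_nonneg: "k > 0 \<Longrightarrow> chi2_density k x \<ge> 0"
  by (cases "x > 0") (auto simp: chi2_density_def dest: chi2_density_pos)

lemma borel_measurable_chi2_density [measurable]: "chi2_density k \<in> borel_measurable borel"
  unfolding chi2_density_def by measurable

lemma isCont_chi2_density:
  assumes "k > 0" "x > 0"
  shows "isCont (chi2_density k) x"
proof -
  have "continuous_on {0<..} (\<lambda>t. t powr (k/2 - 1) * exp (- t/2) / (2 powr (k/2) * Gamma (k/2)))"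
    using assms Gamma_real_pos[of "k/2"] by (intro continuous_intros) (auto simp del: Gamma_real_pos)
  then have "continuous_on {0<..} (chi2_density k)"
    by (rule continuous_on_cong[THEN iffD1, rotated 2]) (auto simp: chi2_density_def)
  with assms show ?thesis
    by (simp add: continuous_on_eq_continuous_at)
qed

lemma chi2_density_double:
  "chi2_density k (2 * t) = (if t \<ge> 0 then t powr (k/2 - 1) / exp t else 0) / (2 * Gamma (k/2))"
proof -
  have "2 powr (k/2) = 2 * 2 powr (k/2 - 1)"
    by (simp add: powr_diff)
  then show ?thesis
    by (auto simp: chi2_density_def powr_mult exp_minus field_simps)
qed

lemma chi2_density_nn_integral:
  assumes "k > 0"
  shows "(\<integral>\<^sup>+x. ennreal (chi2_density k x) \<partial>lborel) = 1"
proof -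
  have \<Gamma>: "Gamma (k/2) > 0"
    using assms by (simp add: Gamma_real_pos)
  have "(\<integral>\<^sup>+t. ennreal (t powr (k/2 - 1) / exp t) * indicator {0..} t \<partial>lborel) = ennreal (Gamma (k/2))"
    using assms by (intro nn_integral_has_integral_lebesgue' Gamma_integral_real) auto
  moreover have "(\<lambda>t. ennreal (if t \<ge> 0 then t powr (k/2 - 1) / exp t else 0)) =
      (\<lambda>t. ennreal (t powr (k/2 - 1) / exp t) * indicator {0..} t)"
    by (auto simp: indicator_def)
  ultimately have Gamma_nn:
      "(\<integral>\<^sup>+t. ennreal (if t \<ge> 0 then t powr (k/2 - 1) / exp t else 0) \<partial>lborel) = Gamma (k/2)"
    by simp
  have "(\<integral>\<^sup>+x. ennreal (chi2_density k x) \<partial>lborel) =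
      2 * (\<integral>\<^sup>+t. ennreal (chi2_density k (2 * t)) \<partial>lborel)"
    using nn_integral_real_affine[of "\<lambda>x. ennreal (chi2_density k x)" 2 0] by simp
  also have "\<dots> = 2 * (\<integral>\<^sup>+t. ennreal (1 / (2 * Gamma (k/2))) *
      ennreal (if t \<ge> 0 then t powr (k/2 - 1) / exp t else 0) \<partial>lborel)"
    using \<Gamma> by (simp add: chi2_density_double ennreal_mult'[symmetric])
  also have "\<dots> = 2 * ennreal (1 / (2 * Gamma (k/2))) * Gamma (k/2)"
    by (simp add: nn_integral_cmult Gamma_nn mult.assoc)
  also have "\<dots> = 1"
    using \<Gamma> by (simp flip: ennreal_mult' ennreal_numeral)
  finally show ?thesis .
qed

lemma integrable_chi2_density: "k > 0 \<Longrightarrow> integrable lborel (chi2_density k)"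
  by (rule integrableI_nn_integral_finite[where x=1]) (auto simp: chi2_density_nonneg chi2_density_nn_integral)

lemma integral_chi2_density: "k > 0 \<Longrightarrow> integral\<^sup>L lborel (chi2_density k) = 1"
  by (subst integral_eq_nn_integral) (auto simp: chi2_density_nonneg chi2_density_nn_integral)

lemma set_integrable_chi2_density:
  "k > 0 \<Longrightarrow> A \<in> sets lborel \<Longrightarrow> set_integrable lborel A (chi2_density k)"
  unfolding set_integrable_def by (rule integrable_mult_indicator) (auto simp: integrable_chi2_density)

lemma chi2_density_integrable_on: "k > 0 \<Longrightarrow> chi2_density k integrable_on {a..b}"
  using set_borel_integral_eq_integral(1)[OF set_integrable_chi2_density] by simp

lemma chi2_CDF_eq_integral:
  assumes "k > 0"
  shows "chi2_CDF k x = integral {0..x} (chi2_density k)"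
proof -
  have "chi2_CDF k x = integral {..x} (chi2_density k)"
    unfolding chi2_CDF_def using assms
    by (intro set_borel_integral_eq_integral(2) set_integrable_chi2_density) auto
  also have "\<dots> = integral UNIV (\<lambda>t. if t \<in> {..x} then chi2_density k t else 0)"
    by (rule integral_restrict_UNIV[symmetric])
  also have "\<dots> = integral UNIV (\<lambda>t. if t \<in> {0..x} then chi2_density k t else 0)"
    by (rule arg_cong[where f="integral UNIV"]) (auto simp: chi2_density_def)
  also have "\<dots> = integral {0..x} (chi2_density k)"
    by (rule integral_restrict_UNIV)
  finally show ?thesis .
qed

lemma chi2_CDF_0: "k > 0 \<Longrightarrow> chi2_CDF k 0 = 0"
  by (simp add: chi2_CDF_eq_integral)

lemma chi2_CDF_continuous_on: "k > 0 \<Longrightarrow> continuous_on {0..b} (chi2_CDF k)"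
  by (simp add: chi2_CDF_eq_integral indefinite_integral_continuous_1 chi2_density_integrable_on)

lemma chi2_CDF_has_real_derivative:
  assumes "k > 0" "x > 0"
  shows "(chi2_CDF k has_real_derivative chi2_density k x) (at x)"
proof -
  have "((\<lambda>u. integral {0..u} (chi2_density k)) has_vector_derivative chi2_density k x) (at x within {0..x+1} - {})"
    by (rule integral_has_vector_derivative_continuous_at[OF chi2_density_integrable_on])
      (use assms in \<open>auto intro: continuous_at_imp_continuous_within isCont_chi2_density\<close>)
  moreover have "at x within {0..x+1} = at x"
    using assms by (intro at_within_interior) auto
  moreover have "chi2_CDF k = (\<lambda>u. integral {0..u} (chi2_density k))"
    using assms by (simp add: fun_eq_iff chi2_CDF_eq_integral)
  ultimately show ?thesis
    by (simp add: has_real_derivative_iff_has_vector_derivative)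
qed

lemma chi2_CDF_tendsto_1:
  assumes "k > 0"
  shows "(chi2_CDF k \<longlongrightarrow> 1) at_top"
proof -
  have "((\<lambda>b. set_lebesgue_integral lborel {0..b} (chi2_density k)) \<longlongrightarrow>
      set_lebesgue_integral lborel {0..} (chi2_density k)) at_top"
    using assms by (intro tendsto_set_lebesgue_integral_at_top set_integrable_chi2_density) auto
  moreover have "set_lebesgue_integral lborel {0..} (chi2_density k) = 1"
  proof -
    have "(\<lambda>x. indicator {0..} x *\<^sub>R chi2_density k x) = chi2_density k"
      by (auto simp: fun_eq_iff indicator_def chi2_density_def)
    then show ?thesis
      unfolding set_lebesgue_integral_def using integral_chi2_density[OF assms] by simp
  qed
  moreover have "set_lebesgue_integral lborel {0..b} (chi2_density k) = chi2_CDF k b" for b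
    using assms by (simp add: chi2_CDF_eq_integral set_borel_integral_eq_integral(2)[OF set_integrable_chi2_density])
  ultimately show ?thesis
    by simp
qed

lemma chi2_CDF_strict_mono:
  assumes "k > 0" "0 < x" "x < y"
  shows "chi2_CDF k x < chi2_CDF k y"
proof (rule DERIV_pos_imp_increasing[OF \<open>x < y\<close>])
  fix t
  assume "x \<le> t"
  with assms have "t > 0"
    by simp
  with assms show "\<exists>d. DERIV (chi2_CDF k) t :> d \<and> d > 0"
    using chi2_CDF_has_real_derivative chi2_density_pos by blast
qed

lemma chi2_surv_has_real_derivative:
  "k > 0 \<Longrightarrow> x > 0 \<Longrightarrow> (chi2_surv k has_real_derivative - chi2_density k x) (at x)"
  unfolding chi2_surv_def[abs_def] by (auto intro!: derivative_eq_intros chi2_CDF_has_real_derivative)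

lemma chi2_surv_strict_antimono:
  "k > 0 \<Longrightarrow> 0 < x \<Longrightarrow> x < y \<Longrightarrow> chi2_surv k y < chi2_surv k x"
  unfolding chi2_surv_def using chi2_CDF_strict_mono by simp

lemma inj_on_chi2_surv: "k > 0 \<Longrightarrow> inj_on (chi2_surv k) {0<..}"
  by (rule inj_onI) (metis chi2_surv_strict_antimono greaterThan_iff less_irrefl linorder_neqE_linordered_idom)

lemma chi2_surv_inv_chi2_surv:
  assumes "k > 0" "x > 0"
  shows "chi2_surv_inv k (chi2_surv k x) = x"
  unfolding chi2_surv_inv_def
  using assms inj_on_chi2_surv[OF assms(1)] by (intro the_equality) (auto dest: inj_onD)

lemma chi2_surv_surj:
  assumes "k > 0" "0 < u" "u < 1"
  shows "\<exists>x>0. chi2_surv k x = u"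
proof -
  have "\<forall>\<^sub>F b in at_top. chi2_CDF k b > 1 - u"
    using assms by (intro order_tendstoD(1)[OF chi2_CDF_tendsto_1]) auto
  then obtain b where b: "chi2_CDF k b > 1 - u" "b \<ge> 0"
    unfolding eventually_at_top_linorder by (meson max.cobounded1 max.cobounded2 order.trans)
  then obtain x where x: "x \<le> b" "chi2_CDF k x = 1 - u"
    using IVT'[of "chi2_CDF k" 0 "1 - u" b, OF _ _ _ chi2_CDF_continuous_on[OF assms(1)]] assms
    by (auto simp: chi2_CDF_0)
  moreover have "x > 0"
  proof (rule ccontr)
    assume "\<not> x > 0"
    then have "chi2_CDF k x = 0"
      using assms(1) by (cases "x = 0") (simp_all add: chi2_CDF_eq_integral)
    with x assms show False
      by simp
  qed
  ultimately show ?thesis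
    by (intro exI[of _ x]) (auto simp: chi2_surv_def)
qed

lemma
  assumes "k > 0" "0 < u" "u < 1"
  shows chi2_surv_inv_pos: "chi2_surv_inv k u > 0"
    and chi2_surv_chi2_surv_inv: "chi2_surv k (chi2_surv_inv k u) = u"
proof -
  obtain x where "x > 0" "chi2_surv k x = u"
    using chi2_surv_surj[OF assms] by blast
  moreover from this have "chi2_surv_inv k u = x"
    using chi2_surv_inv_chi2_surv[OF assms(1)] by blast
  ultimately show "chi2_surv_inv k u > 0" "chi2_surv k (chi2_surv_inv k u) = u"
    by auto
qed

lemma chi2_surv_inv_antimono:
  assumes "k > 0" "0 < u" "u \<le> v" "v < 1"
  shows "chi2_surv_inv k v \<le> chi2_surv_inv k u"
proof (rule ccontr)
  assume "\<not> ?thesis"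
  then have "chi2_surv k (chi2_surv_inv k v) < chi2_surv k (chi2_surv_inv k u)"
    using assms by (intro chi2_surv_strict_antimono chi2_surv_inv_pos) auto
  with assms show False
    by (simp add: chi2_surv_chi2_surv_inv)
qed

lemma chi2_surv_inv_has_real_derivative:
  assumes "k > 0" "0 < u" "u < 1"
  shows "(chi2_surv_inv k has_real_derivative - 1 / chi2_density k (chi2_surv_inv k u)) (at u)"
proof -
  have "chi2_density k (chi2_surv_inv k u) > 0"
    using assms by (intro chi2_density_pos chi2_surv_inv_pos)
  moreover have "(chi2_surv_inv k has_real_derivative inverse (- chi2_density k (chi2_surv_inv k u))) (at u)"
  proof (rule has_field_derivative_inverse_strong_x[where S="{0<..}"])
    show "continuous_on {0<..} (chi2_surv k)"
      using assms by (intro continuous_at_imp_continuous_on ballI DERIV_isCont[OF chi2_surv_has_real_derivative]) auto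
  qed (use assms calculation chi2_surv_inv_pos chi2_surv_chi2_surv_inv chi2_surv_inv_chi2_surv
       chi2_surv_has_real_derivative in auto)
  ultimately show ?thesis
    by (simp add: inverse_eq_divide)
qed

lemma chi2_density_ratio:
  assumes "k > 0" "m > 0" "\<theta> > 0"
  obtains c where "c > 0"
    and "\<And>x. x > 0 \<Longrightarrow>
      \<theta> * chi2_density k (\<theta> * x) / chi2_density m x = c * x powr ((k - m)/2) * exp ((1 - \<theta>) * x / 2)"
proof
  define c where "c = \<theta> * \<theta> powr (k/2 - 1) * (2 powr (m/2) * Gamma (m/2)) / (2 powr (k/2) * Gamma (k/2))"
  show "c > 0"
    using assms by (simp add: c_def Gamma_real_pos)
  fix x :: real
  assume "x > 0"
  have "x powr (k/2 - 1) = x powr ((k - m)/2) * x powr (m/2 - 1)"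
    by (simp add: diff_divide_distrib flip: powr_add)
  moreover have "exp (- (\<theta> * x) / 2) = exp ((1 - \<theta>) * x / 2) * exp (- x / 2)"
    by (simp add: field_simps flip: exp_add)
  ultimately show
    "\<theta> * chi2_density k (\<theta> * x) / chi2_density m x = c * x powr ((k - m)/2) * exp ((1 - \<theta>) * x / 2)"
    using assms \<open>x > 0\<close> Gamma_real_pos[of "k/2"] Gamma_real_pos[of "m/2"]
    by (simp add: chi2_density_def c_def powr_mult field_simps del: Gamma_real_pos)
qed

lemma chi2_surv_scaled_inv_has_real_derivative:
  assumes "k > 0" "m > 0" "\<theta> > 0" "0 < u" "u < 1"
  shows "((\<lambda>u. chi2_surv k (\<theta> * chi2_surv_inv m u)) has_real_derivative
           \<theta> * chi2_density k (\<theta> * chi2_surv_inv m u) / chi2_density m (chi2_surv_inv m u)) (at u)"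
proof -
  have "chi2_surv_inv m u > 0"
    using assms by (intro chi2_surv_inv_pos)
  then have "((\<lambda>u. chi2_surv k (\<theta> * chi2_surv_inv m u)) has_real_derivative
      - chi2_density k (\<theta> * chi2_surv_inv m u) * (\<theta> * (- 1 / chi2_density m (chi2_surv_inv m u)))) (at u)"
    using assms
    by (intro DERIV_chain2[OF chi2_surv_has_real_derivative] DERIV_cmult chi2_surv_inv_has_real_derivative) auto
  then show ?thesis
    by (simp add: mult.commute)
qed

lemma concave_on_realI:
  assumes "connected A"
    and "\<And>x. x \<in> A \<Longrightarrow> (f has_real_derivative f' x) (at x)"
    and "\<And>x y. x \<in> A \<Longrightarrow> y \<in> A \<Longrightarrow> x \<le> y \<Longrightarrow> f' y \<le> f' x"
  shows "concave_on A f"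
  unfolding concave_on_def
  by (rule convex_on_realI[where f'="\<lambda>x. - f' x"]) (auto intro!: derivative_eq_intros assms)

theorem mainTheorem6:
  fixes m h \<theta> :: real
  assumes "m > 0" and "h \<ge> 0" and "\<theta> > 0"
  defines "g \<equiv> (\<lambda>u. chi2_surv (m + h) (\<theta> * chi2_surv_inv m u))"
  shows "(\<theta> \<le> 1 \<longrightarrow> concave_on {0<..<1} g) \<and>
         (\<theta> > 1 \<and> h = 0 \<longrightarrow> convex_on {0<..<1} g)"
proof -
  let ?X = "chi2_surv_inv m"
  obtain c where "c > 0" and ratio: "\<And>x. x > 0 \<Longrightarrow>
      \<theta> * chi2_density (m + h) (\<theta> * x) / chi2_density m x = c * x powr (h/2) * exp ((1 - \<theta>) * x / 2)"
    using chi2_density_ratio[of "m + h" m \<theta>] assms by auto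
  define \<rho> where "\<rho> x = c * x powr (h/2) * exp ((1 - \<theta>) * x / 2)" for x
  have g': "(g has_real_derivative \<rho> (?X u)) (at u)" if "u \<in> {0<..<1}" for u
    using chi2_surv_scaled_inv_has_real_derivative[of "m + h" m \<theta> u] ratio[of "?X u"]
      chi2_surv_inv_pos[of m u] assms that by (simp add: g_def \<rho>_def)
  have X: "0 < ?X v" "?X v \<le> ?X u" if "u \<in> {0<..<1}" "v \<in> {0<..<1}" "u \<le> v" for u v
    using that assms(1) by (auto intro: chi2_surv_inv_pos chi2_surv_inv_antimono)
  show ?thesis
  proof (intro conjI impI)
    assume "\<theta> \<le> 1"
    then have "\<rho> x \<le> \<rho> y" if "0 < x" "x \<le> y" for x y
      using that \<open>c > 0\<close> assms(2) by (auto simp: \<rho>_def intro!: mult_mono powr_mono2)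
    with X show "concave_on {0<..<1} g"
      by (intro concave_on_realI[OF _ g']) auto
  next
    assume "1 < \<theta> \<and> h = 0"
    then have "\<rho> y \<le> \<rho> x" if "0 < x" "x \<le> y" for x y
      using that \<open>c > 0\<close> by (auto simp: \<rho>_def)
    with X show "convex_on {0<..<1} g"
      by (intro convex_on_realI[OF _ g']) auto
  qed
qed

end
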